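(* Fix $\nu$. Assume (R) and the growth-of-sum-moment condition (M), and that $T\ge p$ and $p=o(T)$ if $0\le\eta\le1/2$, respectively $p^{2\eta}=o(T)$ if $\eta>1/2$. Then \[ \widehat{MSPE}_T=\frac1T\sum_{t=1}^T|\mathbf x_t^\top\widehat{\boldsymbol\beta}_{T\nu}-\mathbf x_t^\top\boldsymbol\beta_\nu|^2=O_{\mathbb P}\Big(\frac pT\Big). \]
   Context: Setting: $p=p_T$ may grow with $T$; limits as $T,p\to\infty$. Regressors $\mathbf x_t\in\mathbb R^p$, responses with $Y_t^{(\nu)}=\mathbf x_t^\top\boldsymbol\beta_\nu+\epsilon_t^{(\nu)}$, $t=1,\dots,T$. $\mathbb P,\mathbb E$ conditional on the regressors. $\mathbb X_T=(\mathbf x_1,\dots,\mathbf x_T)^\top$ full rank, $\mathbf Y_T^{(\nu)}=(Y_1^{(\nu)},\dots,Y_T^{(\nu)})^\top$, $\widehat{\boldsymbol\beta}_{T\nu}=(\mathbb X_T^\top\mathbb X_T)^{-1}\mathbb X_T^\top\mathbf Y_T^{(\nu)}$. (R): regressors bounded; there exist positive definite $\Sigma_{\mathbf x}$, $\eta\ge0$, $C<\infty$ and a compact interval $A\subset(0,\infty)$, independent of $T,p$, with $\|T^{-1}\sum_t\mathbf x_t\mathbf x_t^\top-\Sigma_{\mathbf x}\|_2\le Cp^\eta/\sqrt T$ and $\operatorname{spec}(T^{-1}\mathbb X_T^\top\mathbb X_T)\subset A$. (M): there are $C_\nu<\infty$, $\gamma'\ge2$ with $\sup_{j\ge1}\mathbb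 E|\sum_{t=1}^Nx_{tj}\epsilon_t^{(\nu)}|^\gamma\le C_\nu N^{\gamma/2}$ for all $2\le\gamma\le\gamma'$, $N\in\mathbb N$. *)

theory Defs
  imports "HOL-Probability.Probability" "Jordan_Normal_Form.DL_Rank" "Jordan_Normal_Form.Gauss_Jordan_Elimination"
    "Jordan_Normal_Form.Char_Poly"
begin

definition vnorm2 :: "real vec \<Rightarrow> real" where
  "vnorm2 v = sqrt (v \<bullet> v)"

definition mat_norm2 :: "real mat \<Rightarrow> real" where
  "mat_norm2 A = Sup {vnorm2 (A *\<^sub>v v) | v. v \<in> carrier_vec (dim_col A) \<and> vnorm2 v = 1}"

definition pos_def_mat :: "real mat \<Rightarrow> bool" where
  "pos_def_mat A \<longleftrightarrow> A \<in> carrier_mat (dim_row A) (dim_row A) \<and> A\<^sup>T = A \<and>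
     (\<forall>v \<in> carrier_vec (dim_row A). v \<noteq> 0\<^sub>v (dim_row A) \<longrightarrow> v \<bullet> (A *\<^sub>v v) > 0)"

definition xvec :: "(nat \<Rightarrow> nat \<Rightarrow> real) \<Rightarrow> nat \<Rightarrow> nat \<Rightarrow> real vec" where
  "xvec x p t = vec p (\<lambda>j. x t (j + 1))"

definition design :: "(nat \<Rightarrow> nat \<Rightarrow> real) \<Rightarrow> nat \<Rightarrow> nat \<Rightarrow> real mat" where
  "design x T p = mat T p (\<lambda>(i, j). x (i + 1) (j + 1))"

definition resp :: "(nat \<Rightarrow> nat \<Rightarrow> real) \<Rightarrow> nat \<Rightarrow> nat \<Rightarrow> real vec \<Rightarrow> (nat \<Rightarrow> real) \<Rightarrow> real vec" where
  "resp x T p beta e = vec T (\<lambda>i. xvec x p (i + 1) \<bullet> beta + e (i + 1))"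

definition ols :: "real mat \<Rightarrow> real vec \<Rightarrow> real vec" where
  "ols X Y = the (mat_inverse (X\<^sup>T * X)) *\<^sub>v (X\<^sup>T *\<^sub>v Y)"

definition bigO_P :: "'a measure \<Rightarrow> (nat \<Rightarrow> 'a \<Rightarrow> real) \<Rightarrow> (nat \<Rightarrow> real) \<Rightarrow> bool" where
  "bigO_P M Z a \<longleftrightarrow> (\<forall>\<delta>>0. \<exists>K. \<exists>T0. \<forall>T\<ge>T0.
       measure M {\<omega> \<in> space M. \<bar>Z T \<omega>\<bar> > K * a T} < \<delta>)"

end

theory Submission
  imports Defs
begin

text \<open>In the model \<open>Y = X \<beta> + \<epsilon>\<close> the OLS error is \<open>d = (X\<^sup>T X)\<^sup>-\<^sup>1 X\<^sup>T \<epsilon>\<close>,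
  and \<open>T \<cdot> MSPE = |X d|\<^sup>2\<close>. The smallest eigenvalue of the symmetric matrix \<open>T\<^sup>-\<^sup>1 X\<^sup>T X\<close>,
  i.e. the infimum of its Rayleigh quotient, is at least \<open>a > 0\<close>, whence
  \<open>|X d|\<^sup>2 \<le> |X\<^sup>T \<epsilon>|\<^sup>2 / (a T)\<close>. The \<open>j\<close>-th coordinate of \<open>X\<^sup>T \<epsilon>\<close> is \<open>\<Sum>\<^sub>t x\<^sub>t\<^sub>j \<epsilon>\<^sub>t\<close>, whose
  second moment is at most \<open>C T\<close> by (M) with \<open>\<gamma> = 2\<close>. So \<open>MSPE\<close> is \<open>p/T\<close> times a variable of
  bounded expectation, and Markov's inequality gives \<open>O\<^sub>P(p/T)\<close>. Only the lower spectral bound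
  in (R) and the second moment in (M) are needed.\<close>

lemma real_scalar_prod_self_nonneg: "0 \<le> v \<bullet> (v :: real vec)"
  using conjugate_square_ge_0_vec[of v] by simp

lemma real_scalar_prod_self_pos:
  "v \<in> carrier_vec n \<Longrightarrow> v \<noteq> 0\<^sub>v n \<Longrightarrow> 0 < v \<bullet> v" for v :: "real vec"
  using conjugate_square_greater_0_vec[of v n] by simp

lemma scalar_prod_Cauchy_Schwarz:
  fixes v w :: "real vec"
  assumes "v \<in> carrier_vec n" "w \<in> carrier_vec n"
  shows "(v \<bullet> w)\<^sup>2 \<le> (v \<bullet> v) * (w \<bullet> w)"
  using assms Cauchy_Schwarz_ineq_sum[of "\<lambda>i. v $ i" "\<lambda>i. w $ i" "{0..<n}"]
  by (simp add: scalar_prod_def power2_eq_square)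

lemma scalar_prod_symmetric_mat:
  fixes A :: "real mat"
  assumes "A \<in> carrier_mat n n" "A\<^sup>T = A" "v \<in> carrier_vec n" "w \<in> carrier_vec n"
  shows "v \<bullet> (A *\<^sub>v w) = w \<bullet> (A *\<^sub>v v)"
  using assms transpose_vec_mult_scalar[of A n n w v] comm_scalar_prod[of "A *\<^sub>v v" n w] by simp

definition frobenius_sq :: "real mat \<Rightarrow> real" where
  "frobenius_sq A = (\<Sum>i<dim_row A. row A i \<bullet> row A i)"

lemma frobenius_sq_nonneg: "0 \<le> frobenius_sq A"
  unfolding frobenius_sq_def by (intro sum_nonneg real_scalar_prod_self_nonneg)

lemma mult_mat_vec_sq_le:
  fixes A :: "real mat"
  assumes A: "A \<in> carrier_mat n m" and v: "v \<in> carrier_vec m"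
  shows "(A *\<^sub>v v) \<bullet> (A *\<^sub>v v) \<le> frobenius_sq A * (v \<bullet> v)"
proof -
  have "(A *\<^sub>v v) \<bullet> (A *\<^sub>v v) = (\<Sum>i<n. (row A i \<bullet> v)\<^sup>2)"
    using A v by (simp add: scalar_prod_def[of "A *\<^sub>v v"] power2_eq_square atLeast0LessThan)
  also have "\<dots> \<le> (\<Sum>i<n. (row A i \<bullet> row A i) * (v \<bullet> v))"
    by (intro sum_mono scalar_prod_Cauchy_Schwarz[of _ m]) (use A v in auto)
  also have "\<dots> = frobenius_sq A * (v \<bullet> v)"
    using A by (simp add: frobenius_sq_def sum_distrib_right)
  finally show ?thesis .
qed

lemma abs_quadratic_form_le:
  fixes A :: "real mat"
  assumes A: "A \<in> carrier_mat n n" and v: "v \<in> carrier_vec n"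
  shows "\<bar>v \<bullet> (A *\<^sub>v v)\<bar> \<le> sqrt (frobenius_sq A) * (v \<bullet> v)"
proof -
  have "(v \<bullet> (A *\<^sub>v v))\<^sup>2 \<le> (v \<bullet> v) * ((A *\<^sub>v v) \<bullet> (A *\<^sub>v v))"
    by (rule scalar_prod_Cauchy_Schwarz[of _ n]) (use A v in auto)
  also have "\<dots> \<le> (v \<bullet> v) * (frobenius_sq A * (v \<bullet> v))"
    by (intro mult_left_mono mult_mat_vec_sq_le[OF A v] real_scalar_prod_self_nonneg)
  also have "\<dots> = (sqrt (frobenius_sq A) * (v \<bullet> v))\<^sup>2"
    using frobenius_sq_nonneg[of A] by (simp add: power2_eq_square)
  finally show ?thesis
    using frobenius_sq_nonneg[of A] real_scalar_prod_self_nonneg[of v]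
    by (simp add: abs_le_square_iff[symmetric])
qed

lemma quadratic_nonneg_imp_discriminant_le:
  fixes a b c :: real
  assumes nonneg: "\<And>t. 0 \<le> a + 2 * t * b + t\<^sup>2 * c" and "0 \<le> c"
  shows "b\<^sup>2 \<le> a * c"
proof (cases "c = 0")
  case True
  have "b = 0"
  proof (rule ccontr)
    assume "b \<noteq> 0"
    with nonneg[of "- (a + 1) / (2 * b)"] True show False by (simp add: field_simps)
  qed
  with True show ?thesis by simp
next
  case False
  with \<open>0 \<le> c\<close> have "0 < c" by simp
  with nonneg[of "- b / c"] show ?thesis by (simp add: field_simps power2_eq_square)
qed

lemma psd_Cauchy_Schwarz:
  fixes A :: "real mat"
  assumes A: "A \<in> carrier_mat n n" "A\<^sup>T = A"
    and psd: "\<And>u. u \<in> carrier_vec n \<Longrightarrow> 0 \<le> u \<bullet> (A *\<^sub>v u)"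
    and v: "v \<in> carrier_vec n" and w: "w \<in> carrier_vec n"
  shows "(v \<bullet> (A *\<^sub>v w))\<^sup>2 \<le> (v \<bullet> (A *\<^sub>v v)) * (w \<bullet> (A *\<^sub>v w))"
proof (rule quadratic_nonneg_imp_discriminant_le)
  fix t :: real
  have tw: "t \<cdot>\<^sub>v w \<in> carrier_vec n" using w by simp
  have "(v + t \<cdot>\<^sub>v w) \<bullet> (A *\<^sub>v (v + t \<cdot>\<^sub>v w)) =
     v \<bullet> (A *\<^sub>v v) + t * (v \<bullet> (A *\<^sub>v w)) + t * (w \<bullet> (A *\<^sub>v v)) + t * t * (w \<bullet> (A *\<^sub>v w))"
    using A v w tw
    by (simp add: mult_add_distrib_mat_vec[of A n n] mult_mat_vec[of A n n]
        add_scalar_prod_distrib[of _ n] scalar_prod_add_distrib[of _ n] algebra_simps)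
  also have "\<dots> = v \<bullet> (A *\<^sub>v v) + 2 * t * (v \<bullet> (A *\<^sub>v w)) + t\<^sup>2 * (w \<bullet> (A *\<^sub>v w))"
    using scalar_prod_symmetric_mat[OF A v w] by (simp add: power2_eq_square)
  finally show "0 \<le> v \<bullet> (A *\<^sub>v v) + 2 * t * (v \<bullet> (A *\<^sub>v w)) + t\<^sup>2 * (w \<bullet> (A *\<^sub>v w))"
    using psd[of "v + t \<cdot>\<^sub>v w"] v tw by simp
qed (use psd w in auto)

lemma psd_mult_mat_vec_sq_le:
  fixes A :: "real mat"
  assumes A: "A \<in> carrier_mat n n" "A\<^sup>T = A"
    and psd: "\<And>u. u \<in> carrier_vec n \<Longrightarrow> 0 \<le> u \<bullet> (A *\<^sub>v u)"
    and v: "v \<in> carrier_vec n"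
  shows "(A *\<^sub>v v) \<bullet> (A *\<^sub>v v) \<le> sqrt (frobenius_sq A) * (v \<bullet> (A *\<^sub>v v))"
proof -
  define w where "w = A *\<^sub>v v"
  have w: "w \<in> carrier_vec n" unfolding w_def using A v by simp
  have "(w \<bullet> w)\<^sup>2 = (v \<bullet> (A *\<^sub>v w))\<^sup>2"
    using scalar_prod_symmetric_mat[OF A v w] unfolding w_def by simp
  also have "\<dots> \<le> (v \<bullet> (A *\<^sub>v v)) * (w \<bullet> (A *\<^sub>v w))"
    by (rule psd_Cauchy_Schwarz[OF A psd v w])
  also have "\<dots> \<le> (v \<bullet> (A *\<^sub>v v)) * (sqrt (frobenius_sq A) * (w \<bullet> w))"
    using abs_quadratic_form_le[OF A(1) w] psd[OF v] by (intro mult_left_mono) auto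
  finally have "(w \<bullet> w) * (w \<bullet> w) \<le> (sqrt (frobenius_sq A) * (v \<bullet> (A *\<^sub>v v))) * (w \<bullet> w)"
    by (simp add: power2_eq_square mult_ac)
  then show ?thesis
    using real_scalar_prod_self_nonneg[of w] psd[OF v] frobenius_sq_nonneg[of A]
    unfolding w_def[symmetric] by (cases "w \<bullet> w = 0") (auto simp: mult_le_cancel_right)
qed

lemma mat_inverse_if_trivial_kernel:
  fixes A :: "'a :: field mat"
  assumes A: "A \<in> carrier_mat n n"
    and ker: "\<And>v. v \<in> carrier_vec n \<Longrightarrow> A *\<^sub>v v = 0\<^sub>v n \<Longrightarrow> v = 0\<^sub>v n"
  obtains B where "mat_inverse A = Some B" "B \<in> carrier_mat n n" "A * B = 1\<^sub>m n" "B * A = 1\<^sub>m n"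
proof (cases "mat_inverse A")
  case None
  have "det A \<noteq> 0" using ker det_0_iff_vec_prod_zero_field[OF A] by blast
  moreover have "A \<notin> Units (ring_mat TYPE('a) n ())" by (rule mat_inverse(1)[OF A None])
  ultimately show ?thesis using det_non_zero_imp_unit[OF A, where b = "()"] by blast
next
  case (Some B)
  with mat_inverse(2)[OF A Some] that show ?thesis by blast
qed

lemma psd_bounded_below_if_trivial_kernel:
  fixes A :: "real mat"
  assumes A: "A \<in> carrier_mat n n" "A\<^sup>T = A"
    and psd: "\<And>u. u \<in> carrier_vec n \<Longrightarrow> 0 \<le> u \<bullet> (A *\<^sub>v u)"
    and ker: "\<And>v. v \<in> carrier_vec n \<Longrightarrow> A *\<^sub>v v = 0\<^sub>v n \<Longrightarrow> v = 0\<^sub>v n"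
  obtains \<delta> where "0 < \<delta>" "\<And>v. v \<in> carrier_vec n \<Longrightarrow> \<delta> * (v \<bullet> v) \<le> v \<bullet> (A *\<^sub>v v)"
proof -
  obtain B where B: "B \<in> carrier_mat n n" "B * A = 1\<^sub>m n"
    using mat_inverse_if_trivial_kernel[OF A(1) ker] by blast
  define K where "K = frobenius_sq B * sqrt (frobenius_sq A)"
  have K: "0 \<le> K" unfolding K_def using frobenius_sq_nonneg by simp
  have "1 / (1 + K) * (v \<bullet> v) \<le> v \<bullet> (A *\<^sub>v v)" if v: "v \<in> carrier_vec n" for v :: "real vec"
  proof -
    have "v = B *\<^sub>v (A *\<^sub>v v)" using A B v by (simp flip: assoc_mult_mat_vec[of B n n A n v])
    then have "v \<bullet> v \<le> frobenius_sq B * ((A *\<^sub>v v) \<bullet> (A *\<^sub>v v))"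
      using mult_mat_vec_sq_le[OF B(1), of "A *\<^sub>v v"] A v by simp
    also have "\<dots> \<le> K * (v \<bullet> (A *\<^sub>v v))"
      unfolding K_def using psd_mult_mat_vec_sq_le[OF A psd v] frobenius_sq_nonneg[of B]
      by (simp add: mult_left_mono mult.assoc)
    also have "\<dots> \<le> (1 + K) * (v \<bullet> (A *\<^sub>v v))" using psd[OF v] by (simp add: distrib_right)
    finally show ?thesis using K by (simp add: field_simps)
  qed
  moreover have "0 < 1 / (1 + K)" using K by simp
  ultimately show ?thesis using that by blast
qed

lemma char_matrix_quadratic_form:
  fixes A :: "real mat"
  assumes "A \<in> carrier_mat n n" "v \<in> carrier_vec n"
  shows "v \<bullet> (char_matrix A c *\<^sub>v v) = v \<bullet> (A *\<^sub>v v) - c * (v \<bullet> v)"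
proof -
  have "char_matrix A c *\<^sub>v v = A *\<^sub>v v - c \<cdot>\<^sub>v v"
    unfolding char_matrix_def using assms
    by (intro eq_vecI) (auto simp: add_scalar_prod_distrib[of _ n])
  then show ?thesis using assms by (simp add: scalar_prod_minus_distrib[of _ n])
qed

lemma char_matrix_symmetric: "A \<in> carrier_mat n n \<Longrightarrow> A\<^sup>T = A \<Longrightarrow> (char_matrix A c)\<^sup>T = char_matrix A c"
  unfolding char_matrix_def by (auto simp: transpose_add intro!: eq_matI)

definition rayleigh_inf :: "real mat \<Rightarrow> real" where
  "rayleigh_inf A = (INF v \<in> carrier_vec (dim_row A) - {0\<^sub>v (dim_row A)}. (v \<bullet> (A *\<^sub>v v)) / (v \<bullet> v))"

lemma rayleigh_inf_le_quadratic_form: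
  fixes A :: "real mat"
  assumes A: "A \<in> carrier_mat n n" and v: "v \<in> carrier_vec n"
  shows "rayleigh_inf A * (v \<bullet> v) \<le> v \<bullet> (A *\<^sub>v v)"
proof (cases "v = 0\<^sub>v n")
  case False
  have "bdd_below ((\<lambda>w. (w \<bullet> (A *\<^sub>v w)) / (w \<bullet> w)) ` (carrier_vec n - {0\<^sub>v n}))"
  proof (rule bdd_belowI2)
    fix w :: "real vec" assume "w \<in> carrier_vec n - {0\<^sub>v n}"
    then show "- sqrt (frobenius_sq A) \<le> (w \<bullet> (A *\<^sub>v w)) / (w \<bullet> w)"
      using abs_quadratic_form_le[OF A, of w] real_scalar_prod_self_pos[of w n]
      by (simp add: field_simps abs_le_iff)
  qed
  then have "rayleigh_inf A \<le> (v \<bullet> (A *\<^sub>v v)) / (v \<bullet> v)"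
    unfolding rayleigh_inf_def using A v False by (intro cINF_lower) auto
  then show ?thesis using real_scalar_prod_self_pos[OF v False] by (simp add: field_simps)
qed (use A in simp)

text \<open>Shifting by the infimum of the Rayleigh quotient leaves a positive semidefinite matrix,
  which must be singular: otherwise it would be bounded below and the infimum could be raised.\<close>
lemma rayleigh_inf_eigenvalue:
  fixes A :: "real mat"
  assumes A: "A \<in> carrier_mat n n" "A\<^sup>T = A" and n: "0 < n"
  shows "eigenvalue A (rayleigh_inf A)"
  unfolding eigenvalue_char_matrix[OF A(1)]
proof (rule ccontr)
  define M where "M = char_matrix A (rayleigh_inf A)"
  assume "\<not> (\<exists>v. v \<in> carrier_vec n \<and> v \<noteq> 0\<^sub>v n \<and> M *\<^sub>v v = 0\<^sub>v n)"
  moreover have "0 \<le> v \<bullet> (M *\<^sub>v v)" if "v \<in> carrier_vec n" for v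
    unfolding M_def char_matrix_quadratic_form[OF A(1) that]
    using rayleigh_inf_le_quadratic_form[OF A(1) that] by simp
  moreover have "M \<in> carrier_mat n n" "M\<^sup>T = M"
    unfolding M_def using A by (auto intro: char_matrix_symmetric)
  ultimately obtain \<delta> where \<delta>: "0 < \<delta>"
    and M_low: "\<And>v. v \<in> carrier_vec n \<Longrightarrow> \<delta> * (v \<bullet> v) \<le> v \<bullet> (M *\<^sub>v v)"
    using psd_bounded_below_if_trivial_kernel[of M n] by blast
  have "unit_vec n 0 \<in> carrier_vec n - {0\<^sub>v n :: real vec}"
    using n by (auto simp: unit_vec_def zero_vec_def vec_eq_iff)
  then have "rayleigh_inf A + \<delta> \<le> (INF v \<in> carrier_vec n - {0\<^sub>v n}. (v \<bullet> (A *\<^sub>v v)) / (v \<bullet> v))"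
  proof (intro cINF_greatest, blast)
    fix v :: "real vec" assume v: "v \<in> carrier_vec n - {0\<^sub>v n}"
    with M_low[of v] show "rayleigh_inf A + \<delta> \<le> (v \<bullet> (A *\<^sub>v v)) / (v \<bullet> v)"
      using real_scalar_prod_self_pos[of v n] char_matrix_quadratic_form[OF A(1), of v]
      unfolding M_def by (auto simp: field_simps)
  qed
  then have "rayleigh_inf A + \<delta> \<le> rayleigh_inf A"
    unfolding rayleigh_inf_def[of A] using A(1) by simp
  with \<delta> show False by simp
qed

lemma quadratic_form_ge_eigenvalue_bound:
  fixes A :: "real mat"
  assumes A: "A \<in> carrier_mat n n" "A\<^sup>T = A"
    and eig: "\<And>lam. eigenvalue A lam \<Longrightarrow> a \<le> lam"
    and v: "v \<in> carrier_vec n"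
  shows "a * (v \<bullet> v) \<le> v \<bullet> (A *\<^sub>v v)"
proof (cases "n = 0")
  case True
  then show ?thesis using A v by (simp add: scalar_prod_def)
next
  case False
  then have "a \<le> rayleigh_inf A" using eig rayleigh_inf_eigenvalue[OF A] by simp
  then show ?thesis
    using rayleigh_inf_le_quadratic_form[OF A(1) v] real_scalar_prod_self_nonneg[of v]
    by (meson mult_right_mono order_trans)
qed

lemma quadratic_form_le_image_sq:
  fixes A :: "real mat"
  assumes A: "A \<in> carrier_mat n n" and d: "d \<in> carrier_vec n" and c: "0 \<le> c"
    and low: "\<And>v. v \<in> carrier_vec n \<Longrightarrow> c * (v \<bullet> v) \<le> v \<bullet> (A *\<^sub>v v)"
  shows "c * (d \<bullet> (A *\<^sub>v d)) \<le> (A *\<^sub>v d) \<bullet> (A *\<^sub>v d)"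
proof -
  define g where "g = A *\<^sub>v d"
  have g: "g \<in> carrier_vec n" unfolding g_def using A d by simp
  have "0 \<le> (g - c \<cdot>\<^sub>v d) \<bullet> (g - c \<cdot>\<^sub>v d)" by (rule real_scalar_prod_self_nonneg)
  also have "\<dots> = g \<bullet> g - 2 * c * (d \<bullet> g) + c * c * (d \<bullet> d)"
    using g d by (simp add: minus_scalar_prod_distrib[of _ n] scalar_prod_minus_distrib[of _ n]
        comm_scalar_prod[of g n d] algebra_simps)
  finally have "0 \<le> g \<bullet> g - 2 * c * (d \<bullet> g) + c * c * (d \<bullet> d)" .
  moreover have "c * (c * (d \<bullet> d)) \<le> c * (d \<bullet> g)"
    using low[OF d] c unfolding g_def by (simp add: mult_left_mono)
  ultimately show ?thesis unfolding g_def[symmetric] by (simp add: algebra_simps)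
qed

lemma gram_quadratic_form:
  fixes X :: "real mat"
  assumes X: "X \<in> carrier_mat T n" and v: "v \<in> carrier_vec n" and w: "w \<in> carrier_vec n"
  shows "v \<bullet> ((X\<^sup>T * X) *\<^sub>v w) = (X *\<^sub>v v) \<bullet> (X *\<^sub>v w)"
  using transpose_vec_mult_scalar[of "X\<^sup>T" n T "X *\<^sub>v w" v] X v w by simp

lemma smult_mat_mult_mat_vec:
  fixes A :: "'a :: comm_ring mat"
  assumes "A \<in> carrier_mat n m" "v \<in> carrier_vec m"
  shows "(k \<cdot>\<^sub>m A) *\<^sub>v v = k \<cdot>\<^sub>v (A *\<^sub>v v)"
  using assms by (intro eq_vecI) auto

lemma gram_eigenvalue_lower_bound:
  fixes X :: "real mat"
  assumes X: "X \<in> carrier_mat T n" and T: "0 < T"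
    and eig: "\<And>lam. eigenvalue ((1 / real T) \<cdot>\<^sub>m (X\<^sup>T * X)) lam \<Longrightarrow> a \<le> lam"
    and v: "v \<in> carrier_vec n"
  shows "a * real T * (v \<bullet> v) \<le> (X *\<^sub>v v) \<bullet> (X *\<^sub>v v)"
proof -
  define A where "A = (1 / real T) \<cdot>\<^sub>m (X\<^sup>T * X)"
  have A: "A \<in> carrier_mat n n" "A\<^sup>T = A"
    unfolding A_def using X by (auto simp: comm_scalar_prod[of _ T] intro!: eq_matI)
  have "A *\<^sub>v v = (1 / real T) \<cdot>\<^sub>v ((X\<^sup>T * X) *\<^sub>v v)"
    unfolding A_def using X v by (intro smult_mat_mult_mat_vec[of _ n n]) auto
  then have "v \<bullet> (A *\<^sub>v v) = (X *\<^sub>v v) \<bullet> (X *\<^sub>v v) / real T"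
    using X v gram_quadratic_form[OF X v v] by simp
  moreover have "a * (v \<bullet> v) \<le> v \<bullet> (A *\<^sub>v v)"
    using quadratic_form_ge_eigenvalue_bound[OF A eig[folded A_def] v] .
  ultimately show ?thesis using T by (simp add: pos_le_divide_eq mult_ac)
qed

lemma ols_linear_model:
  fixes X :: "real mat"
  assumes X: "X \<in> carrier_mat T n" and b: "b \<in> carrier_vec n" and e: "e \<in> carrier_vec T"
    and c: "0 < c" and low: "\<And>v. v \<in> carrier_vec n \<Longrightarrow> c * (v \<bullet> v) \<le> (X *\<^sub>v v) \<bullet> (X *\<^sub>v v)"
  obtains d where "d \<in> carrier_vec n" "ols X (X *\<^sub>v b + e) = b + d"
    "c * ((X *\<^sub>v d) \<bullet> (X *\<^sub>v d)) \<le> (X\<^sup>T *\<^sub>v e) \<bullet> (X\<^sup>T *\<^sub>v e)"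
proof -
  define G where "G = X\<^sup>T * X"
  have G: "G \<in> carrier_mat n n" unfolding G_def using X by simp
  have G_low: "c * (v \<bullet> v) \<le> v \<bullet> (G *\<^sub>v v)" if "v \<in> carrier_vec n" for v
    unfolding G_def using low[OF that] gram_quadratic_form[OF X that that] by simp
  have "v = 0\<^sub>v n" if v: "v \<in> carrier_vec n" and "G *\<^sub>v v = 0\<^sub>v n" for v
  proof (rule ccontr)
    assume "v \<noteq> 0\<^sub>v n"
    with G_low[OF v] c v real_scalar_prod_self_pos[OF v] \<open>G *\<^sub>v v = 0\<^sub>v n\<close> show False
      by (simp add: mult_le_0_iff)
  qed
  then obtain H where inv: "mat_inverse G = Some H"
    and H: "H \<in> carrier_mat n n" "G * H = 1\<^sub>m n" "H * G = 1\<^sub>m n"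
    using mat_inverse_if_trivial_kernel[OF G] by blast
  define u where "u = X\<^sup>T *\<^sub>v e"
  have u: "u \<in> carrier_vec n" unfolding u_def using X e by simp
  define d where "d = H *\<^sub>v u"
  have d: "d \<in> carrier_vec n" unfolding d_def using H u by simp
  have "X\<^sup>T *\<^sub>v (X *\<^sub>v b + e) = G *\<^sub>v b + u"
    unfolding G_def u_def using X b e
    by (simp add: mult_add_distrib_mat_vec[of "X\<^sup>T" n T] assoc_mult_mat_vec[of "X\<^sup>T" n T X n b])
  then have "ols X (X *\<^sub>v b + e) = H *\<^sub>v (G *\<^sub>v b + u)"
    unfolding ols_def G_def[symmetric] inv by simp
  also have "\<dots> = b + d"
    unfolding d_def using H G b u
    by (simp add: mult_add_distrib_mat_vec[of H n n] assoc_mult_mat_vec[of H n n G n b, symmetric])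
  finally have ols: "ols X (X *\<^sub>v b + e) = b + d" .
  have Gd: "G *\<^sub>v d = u" unfolding d_def using G H u
    by (simp add: assoc_mult_mat_vec[of G n n H n u, symmetric])
  have "c * ((X *\<^sub>v d) \<bullet> (X *\<^sub>v d)) = c * (d \<bullet> (G *\<^sub>v d))"
    unfolding G_def using gram_quadratic_form[OF X d d] by simp
  also have "\<dots> \<le> u \<bullet> u"
    using quadratic_form_le_image_sq[OF G d _ G_low] c Gd by simp
  finally show ?thesis using that d ols unfolding u_def by blast
qed

lemma row_design: "i < T \<Longrightarrow> row (design x T n) i = xvec x n (Suc i)"
  unfolding design_def xvec_def by (intro eq_vecI) auto

lemma resp_eq_design_mult:
  assumes "b \<in> carrier_vec n"
  shows "resp x T n b e = design x T n *\<^sub>v b + vec T (\<lambda>i. e (Suc i))"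
  unfolding resp_def using assms row_design[of _ T x n]
  by (intro eq_vecI) (auto simp: design_def)

lemma sum_sq_xvec_scalar_prod:
  assumes d: "d \<in> carrier_vec n"
  shows "(\<Sum>t\<in>{1..T}. (xvec x n t \<bullet> d)\<^sup>2) = (design x T n *\<^sub>v d) \<bullet> (design x T n *\<^sub>v d)"
proof -
  have "(design x T n *\<^sub>v d) \<bullet> (design x T n *\<^sub>v d) = (\<Sum>k<T. ((design x T n *\<^sub>v d) $ k)\<^sup>2)"
    by (simp add: scalar_prod_def power2_eq_square atLeast0LessThan design_def)
  also have "\<dots> = (\<Sum>k<T. (xvec x n (Suc k) \<bullet> d)\<^sup>2)"
    by (intro sum.cong refl) (simp add: design_def xvec_def)
  finally show ?thesis by (simp add: sum.atLeast1_atMost_eq)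
qed

lemma design_transpose_mult_sq:
  fixes x :: "nat \<Rightarrow> nat \<Rightarrow> real" and T n :: nat and e :: "nat \<Rightarrow> real" and u :: "real vec"
  defines "u \<equiv> (design x T n)\<^sup>T *\<^sub>v vec T (\<lambda>i. e (Suc i))"
  shows "u \<bullet> u = (\<Sum>j\<in>{1..n}. (\<Sum>t\<in>{1..T}. x t j * e t)\<^sup>2)"
proof -
  have "u \<bullet> u = (\<Sum>j<n. (u $ j)\<^sup>2)"
    unfolding u_def by (simp add: scalar_prod_def power2_eq_square atLeast0LessThan design_def)
  also have "\<dots> = (\<Sum>j<n. (\<Sum>t\<in>{1..T}. x t (Suc j) * e t)\<^sup>2)"
  proof (intro sum.cong refl)
    fix j assume "j \<in> {..<n}"
    then show "(u $ j)\<^sup>2 = (\<Sum>t\<in>{1..T}. x t (Suc j) * e t)\<^sup>2"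
      unfolding u_def design_def
      by (simp add: scalar_prod_def sum.atLeast1_atMost_eq atLeast0LessThan)
  qed
  finally show ?thesis by (simp add: sum.atLeast1_atMost_eq)
qed

lemma mspe_le_score_sq_sum:
  fixes x :: "nat \<Rightarrow> nat \<Rightarrow> real" and e :: "nat \<Rightarrow> real"
  assumes T: "1 \<le> T" and a: "0 < a" and b: "b \<in> carrier_vec n"
    and eig: "\<And>lam. eigenvalue ((1 / real T) \<cdot>\<^sub>m ((design x T n)\<^sup>T * design x T n)) lam \<Longrightarrow> a \<le> lam"
  shows "(1 / real T) * (\<Sum>t\<in>{1..T}. \<bar>xvec x n t \<bullet> ols (design x T n) (resp x T n b e)
            - xvec x n t \<bullet> b\<bar>\<^sup>2)
         \<le> (\<Sum>j\<in>{1..n}. (\<Sum>t\<in>{1..T}. x t j * e t)\<^sup>2) / (a * (real T)\<^sup>2)"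
proof -
  define X where "X = design x T n"
  have X: "X \<in> carrier_mat T n" unfolding X_def design_def by simp
  have low: "a * real T * (v \<bullet> v) \<le> (X *\<^sub>v v) \<bullet> (X *\<^sub>v v)" if "v \<in> carrier_vec n" for v
    using gram_eigenvalue_lower_bound[OF X _ eig that] T unfolding X_def by simp
  have "0 < a * real T" using a T by simp
  from ols_linear_model[OF X b _ this low, of "vec T (\<lambda>i. e (Suc i))"]
  obtain d where d: "d \<in> carrier_vec n"
    and ols: "ols X (X *\<^sub>v b + vec T (\<lambda>i. e (Suc i))) = b + d"
    and err: "a * real T * ((X *\<^sub>v d) \<bullet> (X *\<^sub>v d))
      \<le> (X\<^sup>T *\<^sub>v vec T (\<lambda>i. e (Suc i))) \<bullet> (X\<^sup>T *\<^sub>v vec T (\<lambda>i. e (Suc i)))"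
    by auto
  have "xvec x n t \<bullet> (b + d) - xvec x n t \<bullet> b = xvec x n t \<bullet> d" for t
    using b d by (simp add: scalar_prod_add_distrib[of _ n] xvec_def)
  then have "(\<Sum>t\<in>{1..T}. \<bar>xvec x n t \<bullet> ols X (resp x T n b e) - xvec x n t \<bullet> b\<bar>\<^sup>2)
      = (X *\<^sub>v d) \<bullet> (X *\<^sub>v d)"
    unfolding resp_eq_design_mult[OF b] X_def[symmetric] ols
    using sum_sq_xvec_scalar_prod[OF d, of x T] by (simp add: X_def)
  then show ?thesis
    using err design_transpose_mult_sq[of x T n e] a T unfolding X_def
    by (simp add: field_simps power2_eq_square)
qed

lemma nn_integral_le_imp_integral_le:
  fixes f :: "'a \<Rightarrow> real"
  assumes f: "f \<in> borel_measurable M" and nonneg: "\<And>x. 0 \<le> f x"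
    and le: "(\<integral>\<^sup>+ x. ennreal (f x) \<partial>M) \<le> ennreal c" and c: "0 \<le> c"
  shows "integrable M f" and "integral\<^sup>L M f \<le> c"
proof -
  show int: "integrable M f"
    using le by (intro integrableI_bounded[OF f]) (auto simp: nonneg top.not_eq_extremum le_less_trans)
  have "ennreal (integral\<^sup>L M f) = (\<integral>\<^sup>+ x. ennreal (f x) \<partial>M)"
    using nonneg by (intro nn_integral_eq_integral[OF int, symmetric]) auto
  with le have "ennreal (integral\<^sup>L M f) \<le> ennreal c" by simp
  with c show "integral\<^sup>L M f \<le> c" by (subst (asm) ennreal_le_iff) auto
qed

lemma (in prob_space) expectation_sum_sq_le:
  fixes S :: "nat \<Rightarrow> 'a \<Rightarrow> real" and c :: real
  assumes meas: "\<And>j. S j \<in> borel_measurable M"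
    and mom: "\<And>j. j \<in> J \<Longrightarrow> (\<integral>\<^sup>+ \<omega>. ennreal ((S j \<omega>)\<^sup>2) \<partial>M) \<le> ennreal c"
    and c: "0 \<le> c"
  shows "integrable M (\<lambda>\<omega>. \<Sum>j\<in>J. (S j \<omega>)\<^sup>2)"
    and "expectation (\<lambda>\<omega>. \<Sum>j\<in>J. (S j \<omega>)\<^sup>2) \<le> card J * c"
proof -
  have int: "integrable M (\<lambda>\<omega>. (S j \<omega>)\<^sup>2)" and E: "expectation (\<lambda>\<omega>. (S j \<omega>)\<^sup>2) \<le> c"
    if "j \<in> J" for j
    using nn_integral_le_imp_integral_le[OF _ _ mom[OF that] c] meas by auto
  show "integrable M (\<lambda>\<omega>. \<Sum>j\<in>J. (S j \<omega>)\<^sup>2)"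
    using int by (rule Bochner_Integration.integrable_sum)
  show "expectation (\<lambda>\<omega>. \<Sum>j\<in>J. (S j \<omega>)\<^sup>2) \<le> card J * c"
    using int E sum_mono[of J "\<lambda>j. expectation (\<lambda>\<omega>. (S j \<omega>)\<^sup>2)" "\<lambda>_. c"]
    by (simp add: Bochner_Integration.integral_sum)
qed

lemma (in prob_space) bigO_P_if_dominated_expectation:
  fixes Z W :: "nat \<Rightarrow> 'a \<Rightarrow> real" and b :: "nat \<Rightarrow> real"
  assumes W_int: "\<And>T. integrable M (W T)" and W_nonneg: "\<And>T \<omega>. \<omega> \<in> space M \<Longrightarrow> 0 \<le> W T \<omega>"
    and W_exp: "\<And>T. T0 \<le> T \<Longrightarrow> expectation (W T) \<le> C * b T"
    and Z_le: "\<And>T \<omega>. T0 \<le> T \<Longrightarrow> \<omega> \<in> space M \<Longrightarrow> \<bar>Z T \<omega>\<bar> \<le> W T \<omega>"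
    and b: "\<And>T. 0 \<le> b T"
  shows "bigO_P M Z b"
  unfolding bigO_P_def
proof (intro allI impI)
  fix \<delta> :: real assume \<delta>: "0 < \<delta>"
  define K where "K = 2 * (\<bar>C\<bar> + 1) / \<delta>"
  have K: "0 < K" unfolding K_def using \<delta> by simp
  have "measure M {\<omega> \<in> space M. \<bar>Z T \<omega>\<bar> > K * b T} < \<delta>" if T: "T0 \<le> T" for T
  proof (cases "b T = 0")
    case True
    have "0 \<le> expectation (W T)" by (intro integral_nonneg_AE AE_I2 W_nonneg)
    with W_exp[OF T] True have "expectation (W T) = 0" by simp
    then have "AE \<omega> in M. W T \<omega> = 0"
      using integral_nonneg_eq_0_iff_AE[OF W_int AE_I2[OF W_nonneg]] by simp
    with AE_space have "AE \<omega> in M. \<not> \<bar>Z T \<omega>\<bar> > K * b T"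
    proof eventually_elim
      case (elim \<omega>)
      with Z_le[OF T, of \<omega>] True show ?case by simp
    qed
    with \<delta> show ?thesis by (simp add: prob_eq_0_AE)
  next
    case False
    with b[of T] have bT: "0 < K * b T" using K by simp
    have "{\<omega> \<in> space M. \<bar>Z T \<omega>\<bar> > K * b T} \<subseteq> {\<omega> \<in> space M. K * b T \<le> W T \<omega>}"
    proof safe
      fix \<omega> assume "\<omega> \<in> space M" "\<bar>Z T \<omega>\<bar> > K * b T"
      with Z_le[OF T, of \<omega>] show "K * b T \<le> W T \<omega>" by linarith
    qed
    then have "measure M {\<omega> \<in> space M. \<bar>Z T \<omega>\<bar> > K * b T}
        \<le> measure M {\<omega> \<in> space M. K * b T \<le> W T \<omega>}"
      using borel_measurable_integrable[OF W_int] by (intro finite_measure_mono) measurable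
    also have "\<dots> \<le> expectation (W T) / (K * b T)"
      using W_nonneg by (intro integral_Markov_inequality_measure[OF W_int _ _ bT]) auto
    also have "\<dots> \<le> (\<bar>C\<bar> + 1) * b T / (K * b T)"
    proof (intro divide_right_mono)
      have "C * b T \<le> (\<bar>C\<bar> + 1) * b T" using b[of T] by (intro mult_right_mono) auto
      with W_exp[OF T] show "expectation (W T) \<le> (\<bar>C\<bar> + 1) * b T" by linarith
    qed (use bT in simp)
    also have "\<dots> = (\<bar>C\<bar> + 1) / K" using False by simp
    also have "\<dots> = \<delta> / 2" unfolding K_def using \<delta> by (simp add: field_simps)
    also have "\<dots> < \<delta>" using \<delta> by simp
    finally show ?thesis .
  qed
  then show "\<exists>K T0. \<forall>T\<ge>T0. measure M {\<omega> \<in> space M. \<bar>Z T \<omega>\<bar> > K * b T} < \<delta>"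
    by blast
qed

lemma (in prob_space) expectation_score_sq_le:
  fixes x :: "nat \<Rightarrow> nat \<Rightarrow> real" and eps :: "nat \<Rightarrow> 'a \<Rightarrow> real"
  assumes eps_meas: "\<And>t. eps t \<in> borel_measurable M" and C: "0 \<le> C"
    and mom: "\<And>N j. 1 \<le> j \<Longrightarrow>
      (\<integral>\<^sup>+ \<omega>. ennreal ((\<Sum>t\<in>{1..N}. x t j * eps t \<omega>)\<^sup>2) \<partial>M) \<le> ennreal (C * real N)"
  shows "integrable M (\<lambda>\<omega>. \<Sum>j\<in>{1..n}. (\<Sum>t\<in>{1..N}. x t j * eps t \<omega>)\<^sup>2)"
    and "expectation (\<lambda>\<omega>. \<Sum>j\<in>{1..n}. (\<Sum>t\<in>{1..N}. x t j * eps t \<omega>)\<^sup>2) \<le> real n * (C * real N)"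
  using expectation_sum_sq_le[of "\<lambda>j \<omega>. \<Sum>t\<in>{1..N}. x t j * eps t \<omega>" "{1..n}" "C * real N"]
    eps_meas mom C by (auto simp: measurable)

lemma second_moment_from_M:
  fixes M :: "'a measure" and x :: "nat \<Rightarrow> nat \<Rightarrow> real" and eps :: "nat \<Rightarrow> 'a \<Rightarrow> real"
  assumes "\<exists>C \<gamma>'. \<gamma>' \<ge> 2 \<and> (\<forall>\<gamma> N j. 2 \<le> \<gamma> \<and> \<gamma> \<le> \<gamma>' \<and> j \<ge> 1 \<longrightarrow>
        (\<integral>\<^sup>+ \<omega>. ennreal (\<bar>\<Sum>t\<in>{1..N}. x t j * eps t \<omega>\<bar> powr \<gamma>) \<partial>M)
          \<le> ennreal (C * real N powr (\<gamma> / 2)))"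
  obtains C where "0 \<le> C" "\<And>N j. 1 \<le> j \<Longrightarrow>
      (\<integral>\<^sup>+ \<omega>. ennreal ((\<Sum>t\<in>{1..N}. x t j * eps t \<omega>)\<^sup>2) \<partial>M) \<le> ennreal (C * real N)"
proof -
  from assms obtain C0 and \<gamma>' :: real where "2 \<le> \<gamma>'" and mom_\<gamma>: "\<forall>\<gamma> N j. 2 \<le> \<gamma> \<and> \<gamma> \<le> \<gamma>' \<and> 1 \<le> j \<longrightarrow>
      (\<integral>\<^sup>+ \<omega>. ennreal (\<bar>\<Sum>t\<in>{1..N}. x t j * eps t \<omega>\<bar> powr \<gamma>) \<partial>M) \<le> ennreal (C0 * real N powr (\<gamma> / 2))"
    by blast
  have mom: "(\<integral>\<^sup>+ \<omega>. ennreal ((\<Sum>t\<in>{1..N}. x t j * eps t \<omega>)\<^sup>2) \<partial>M) \<le> ennreal (C0 * real N)"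
    if "1 \<le> j" for N j
    using mom_\<gamma>[rule_format, of 2 j N] \<open>2 \<le> \<gamma>'\<close> that by (simp add: power2_abs)
  have "(\<integral>\<^sup>+ \<omega>. ennreal ((\<Sum>t\<in>{1..N}. x t j * eps t \<omega>)\<^sup>2) \<partial>M) \<le> ennreal (max C0 0 * real N)"
    if "1 \<le> j" for N j
    using mom[OF that] by (rule order_trans) (auto intro: ennreal_leI mult_right_mono)
  then show ?thesis using that[of "max C0 0"] by simp
qed

theorem corollary2:
  fixes M :: "'a measure"
    and x :: "nat \<Rightarrow> nat \<Rightarrow> real"
    and p :: "nat \<Rightarrow> nat"
    and beta :: "nat \<Rightarrow> real vec"
    and eps :: "nat \<Rightarrow> 'a \<Rightarrow> real"
    and \<eta> :: real
  assumes prob: "prob_space M"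
    and eps_meas: "\<And>t. eps t \<in> borel_measurable M"
    and beta_dim: "\<And>T. beta T \<in> carrier_vec (p T)"
    \<comment> \<open>(R)\<close>
    and R_bdd: "\<exists>B. \<forall>t j. \<bar>x t j\<bar> \<le> B"
    and R_cov: "\<exists>\<Sigma> :: nat \<Rightarrow> nat \<Rightarrow> real. \<exists>C. \<eta> \<ge> 0 \<and>
        (\<forall>T\<ge>1. pos_def_mat (mat (p T) (p T) (\<lambda>(i, j). \<Sigma> (i + 1) (j + 1))) \<and>
           mat_norm2 ((1 / real T) \<cdot>\<^sub>m ((design x T (p T))\<^sup>T * design x T (p T))
              - mat (p T) (p T) (\<lambda>(i, j). \<Sigma> (i + 1) (j + 1)))
           \<le> C * real (p T) powr \<eta> / sqrt (real T))"
    and R_spec: "\<exists>a b. 0 < a \<and> a \<le> b \<and> (\<forall>T\<ge>1. \<forall>lam.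
        eigenvalue ((1 / real T) \<cdot>\<^sub>m ((design x T (p T))\<^sup>T * design x T (p T))) lam \<longrightarrow> lam \<in> {a..b})"
    and full_rank: "\<And>T. T \<ge> 1 \<Longrightarrow> vec_space.rank T (design x T (p T)) = p T"
    \<comment> \<open>(M)\<close>
    and M_mom: "\<exists>C \<gamma>'. \<gamma>' \<ge> 2 \<and> (\<forall>\<gamma> N j. 2 \<le> \<gamma> \<and> \<gamma> \<le> \<gamma>' \<and> j \<ge> 1 \<longrightarrow>
        (\<integral>\<^sup>+ \<omega>. ennreal (\<bar>\<Sum>t\<in>{1..N}. x t j * eps t \<omega>\<bar> powr \<gamma>) \<partial>M)
          \<le> ennreal (C * real N powr (\<gamma> / 2)))"
    \<comment> \<open>dimension conditions\<close>
    and T_ge_p: "\<And>T. p T \<le> T"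
    and rate_small: "\<eta> \<le> 1/2 \<Longrightarrow> (\<lambda>T. real (p T) / real T) \<longlonglongrightarrow> 0"
    and rate_large: "\<eta> > 1/2 \<Longrightarrow> (\<lambda>T. real (p T) powr (2 * \<eta>) / real T) \<longlonglongrightarrow> 0"
  shows "bigO_P M
     (\<lambda>T \<omega>. (1 / real T) * (\<Sum>t\<in>{1..T}.
        \<bar>xvec x (p T) t \<bullet> ols (design x T (p T)) (resp x T (p T) (beta T) (\<lambda>s. eps s \<omega>))
          - xvec x (p T) t \<bullet> beta T\<bar>^2))
     (\<lambda>T. real (p T) / real T)"
proof -
  interpret prob_space M by (rule prob)
  obtain a where a: "0 < a" and eig: "\<And>T lam. 1 \<le> T \<Longrightarrow>
      eigenvalue ((1 / real T) \<cdot>\<^sub>m ((design x T (p T))\<^sup>T * design x T (p T))) lam \<Longrightarrow> a \<le> lam"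
    using R_spec by fastforce
  obtain C where C: "0 \<le> C" and mom: "\<And>N j. 1 \<le> j \<Longrightarrow>
      (\<integral>\<^sup>+ \<omega>. ennreal ((\<Sum>t\<in>{1..N}. x t j * eps t \<omega>)\<^sup>2) \<partial>M) \<le> ennreal (C * real N)"
    using M_mom second_moment_from_M by blast
  define W where "W T \<omega> = (\<Sum>j\<in>{1..p T}. (\<Sum>t\<in>{1..T}. x t j * eps t \<omega>)\<^sup>2) / (a * (real T)\<^sup>2)"
    for T \<omega>
  have W_int: "integrable M (W T)" and W_exp: "expectation (W T) \<le> C / a * (real (p T) / real T)"
    for T
  proof -
    note E = expectation_score_sq_le[OF eps_meas C mom, where n = "p T" and N = T]
    show "integrable M (W T)" unfolding W_def using E(1) by simp
    have "expectation (W T) \<le> real (p T) * (C * real T) / (a * (real T)\<^sup>2)"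
      unfolding W_def integral_divide_zero using E(2) a by (intro divide_right_mono) auto
    also have "\<dots> = C / a * (real (p T) / real T)" by (simp add: field_simps power2_eq_square)
    finally show "expectation (W T) \<le> C / a * (real (p T) / real T)" .
  qed
  have Z_le: "\<bar>(1 / real T) * (\<Sum>t\<in>{1..T}.
        \<bar>xvec x (p T) t \<bullet> ols (design x T (p T)) (resp x T (p T) (beta T) (\<lambda>s. eps s \<omega>))
          - xvec x (p T) t \<bullet> beta T\<bar>^2)\<bar> \<le> W T \<omega>" if T: "1 \<le> T" for T \<omega>
    unfolding W_def using mspe_le_score_sq_sum[OF T a beta_dim eig[OF T]] by (simp add: sum_nonneg)
  show ?thesis
    by (rule bigO_P_if_dominated_expectation[OF W_int _ W_exp Z_le])
      (use a in \<open>auto simp: W_def intro!: divide_nonneg_nonneg sum_nonneg\<close>)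
qed

end
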